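(* Let $m\ge2$, let $\mathbf A$ be the $(m-1)\times(m-1)$ tridiagonal matrix with $2$ on the diagonal and $-1$ on the sub- and super-diagonals, and let $\mathbf x(\varepsilon)$ be the solution of $e^{-\mathbf x}=\frac{\varepsilon^2}{8}\mathbf A^{-1}\mathbf x$ satisfying $\mathbf x=-2\log(\varepsilon)\mathbf 1-\log|\log\varepsilon|\mathbf 1+2\log(2)\mathbf 1-\log(\mathbf A^{-1}\mathbf 1)+o(1)$. Put $\mathbf w=\mathbf A^{-1}\mathbf x$ and consider the eigenvalue problem for $(\omega^2,\xi)$, $\xi\in\mathbb R^{m-1}\setminus\{0\}$: $$ (2-\omega^2)\xi_j-2\big(w_{j+1}\xi_{j+1}-2w_j\xi_j+w_{j-1}\xi_{j-1}\big)=0,\quad j=1,\dots,m-1, $$ with the convention $w_0\xi_0=w_m\xi_m=0$. Then for sufficiently small $\varepsilon>0$ its $m-1$ eigenvalues can be labelled $\omega_1^2,\dots,\omega_{m-1}^2$ so that $$ \omega_n^2=2+\big(-4\log\varepsilon-2\log|\log\varepsilon|+4\log2\big)\frac{n(n+1)}{2}+\mathcal O(1)\quad\text{as }\varepsilon\to0,\qquad n=1,\dots,m-1 . $$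
   Context: For a vector $\mathbf y$, $\log\mathbf y$ denotes the componentwise logarithm; $\mathbf 1=(1,\dots,1)^T\in\mathbb R^{m-1}$. The values $n(n+1)/2$, $n=1,\dots,m-1$, form the set $\{1,3,6,\dots,m(m-1)/2\}$. *)

theory Defs
  imports "HOL-Analysis.Analysis" "Jordan_Normal_Form.Gauss_Jordan_Elimination" "Jordan_Normal_Form.Char_Poly"
begin

text \<open>The (m-1) x (m-1) tridiagonal matrix with 2 on the diagonal and -1 on the
  sub- and super-diagonals (0-based indices i,j < m-1; index i corresponds to j=i+1
  of the paper).\<close>
definition Amat :: "nat \<Rightarrow> real mat" where
  "Amat m = mat (m - 1) (m - 1)
     (\<lambda>(i, j). if i = j then 2 else if i = j + 1 \<or> j = i + 1 then -1 else 0)"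

text \<open>The inverse matrix A^{-1} (A is invertible, so mat_inverse returns Some).\<close>
definition Ainv :: "nat \<Rightarrow> real mat" where
  "Ainv m = the (mat_inverse (Amat m))"

text \<open>Matrix of the eigenvalue problem
  (2 - om) xi_j - 2 (w_{j+1} xi_{j+1} - 2 w_j xi_j + w_{j-1} xi_{j-1}) = 0,
  with w_0 xi_0 = w_m xi_m = 0, written as  M xi = om xi, i.e.
  M = 2 I + 2 A diag(w).\<close>
definition eig_mat :: "nat \<Rightarrow> real vec \<Rightarrow> real mat" where
  "eig_mat m w = mat (m - 1) (m - 1)
     (\<lambda>(i, j). (if i = j then 2 else 0) + 2 * (Amat m $$ (i, j)) * (w $ j))"

end

theory Submission
  imports Defs
begin

(*
  Notation: v = A^{-1} 1, whose entries are v_j = j (m - j) / 2, and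
  L(eps) = -2 log eps - log|log eps| + 2 log 2, which tends to infinity as eps -> 0+.
  The assumed expansion of x says that w = A^{-1} x = L v + r with a convergent remainder r.  The matrix of the eigenvalue problem is
  2 I + 2 A diag(w) = 2 I + 2 L (A diag(v) + L^{-1} A diag(r)).

  The operator u |-> x (m - x) / 2 * (2 u(x) - u(x - 1) - u(x + 1)) is
     triangular on falling factorials with diagonal entries lam n = n (n + 1) / 2, so it has a
     polynomial eigenfunction of degree n + 1 vanishing at 0 and m.  Its samples at 1, ..., m - 1,
     divided by v, form an eigenvector of A diag(v); hence the characteristic polynomial of
     A diag(v) is the product of (X - lam n), n = 1, ..., m - 1, and all these roots are simple.
  2. Perturbation.  Differentiating the permutation expansion of the determinant, a simple real
     eigenvalue of B persists within O(h) as a real eigenvalue of B + h G(h) for convergent G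
     (intermediate value theorem on the characteristic polynomial).
  3. Assembly.  Rescaling by 2 L gives eigenvalues within O(1) of 2 + 2 L lam n; as these targets
     are 2 L >> O(1) apart, the m - 1 eigenvalues found are distinct and hence are all of them.
*)

section \<open>Falling factorials and a discrete Sturm--Liouville operator\<close>

fun falling :: "real \<Rightarrow> nat \<Rightarrow> real" where
  "falling x 0 = 1"
| "falling x (Suc k) = x * falling (x - 1) k"

declare falling.simps(2)[simp del]

lemma falling_Suc_right: "falling x (Suc k) = falling x k * (x - real k)"
proof (induction k arbitrary: x)
  case 0 then show ?case by (simp add: falling.simps)
next
  case (Suc k)
  have "falling x (Suc (Suc k)) = x * falling (x - 1) (Suc k)" by (simp add: falling.simps)
  also have "\<dots> = x * (falling (x - 1) k * (x - 1 - real k))" using Suc by simp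
  also have "\<dots> = (x * falling (x - 1) k) * (x - real (Suc k))" by (simp add: algebra_simps)
  finally show ?case by (simp add: falling.simps)
qed

lemma falling_forward_difference:
  "falling (x + 1) (Suc k) - falling x (Suc k) = real (Suc k) * falling x k"
proof (induction k arbitrary: x)
  case 0 then show ?case by (simp add: falling.simps)
next
  case (Suc k)
  have IH: "falling x (Suc k) - falling (x - 1) (Suc k) = real (Suc k) * falling (x - 1) k"
    using Suc[of "x - 1"] by simp
  have "falling (x + 1) (Suc (Suc k)) - falling x (Suc (Suc k))
      = falling x (Suc k) + x * (falling x (Suc k) - falling (x - 1) (Suc k))"
    by (simp add: falling.simps algebra_simps)
  also have "\<dots> = real (Suc (Suc k)) * falling x (Suc k)"
    using IH by (simp add: falling.simps algebra_simps)
  finally show ?case .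
qed

definition lam :: "nat \<Rightarrow> real" where "lam n = real n * (real n + 1) / 2"

lemma lam_sep: assumes "a < b" shows "lam a + 1 \<le> lam b"
proof -
  have "real a + 1 \<le> real b" using assms by linarith
  then have "(real a + 1) * (real a + 2) \<le> real b * (real b + 1)" by (intro mult_mono) auto
  then show ?thesis unfolding lam_def by (simp add: field_simps)
qed

lemma lam_pos: "1 \<le> n \<Longrightarrow> 0 < lam n"
  using lam_sep[of 0 n] by (simp add: lam_def)

lemma lam_inj: "inj_on lam S"
  by (rule inj_onI) (metis lam_sep linorder_neqE_nat add_le_same_cancel1 not_one_le_zero)

text \<open>On samples at \<open>1, \<dots>, m - 1\<close> of functions vanishing at \<open>0\<close> and \<open>m\<close> this operator acts as
  \<open>diag(v) A\<close>, which is similar to \<open>A diag(v)\<close>.\<close>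
definition diff_op :: "nat \<Rightarrow> (real \<Rightarrow> real) \<Rightarrow> real \<Rightarrow> real" where
  "diff_op m u x = x * (real m - x) / 2 * (2 * u x - u (x - 1) - u (x + 1))"

lemma diff_op_sum:
  "diff_op m (\<lambda>x. \<Sum>j\<in>S. c j * f j x) x = (\<Sum>j\<in>S. c j * diff_op m (f j) x)"
proof -
  have "2 * (\<Sum>j\<in>S. c j * f j x) - (\<Sum>j\<in>S. c j * f j (x - 1)) - (\<Sum>j\<in>S. c j * f j (x + 1))
      = (\<Sum>j\<in>S. c j * (2 * f j x - f j (x - 1) - f j (x + 1)))"
    by (simp add: sum_subtractf sum_distrib_left sum.distrib algebra_simps)
  then show ?thesis unfolding diff_op_def by (simp add: sum_distrib_left mult.left_commute)
qed

definition lower_coeff :: "nat \<Rightarrow> nat \<Rightarrow> real" where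
  "lower_coeff m j = real (Suc j) * real j * (real m - real j) / 2"

lemma diff_op_falling:
  "diff_op m (\<lambda>x. falling x (Suc j)) x = lam j * falling x (Suc j) - lower_coeff m j * falling x j"
proof (cases j)
  case 0 then show ?thesis by (simp add: diff_op_def lam_def lower_coeff_def falling.simps)
next
  case (Suc i)
  have d_up: "falling (x + 1) (Suc j) - falling x (Suc j) = real (Suc j) * falling x j"
    by (rule falling_forward_difference)
  have d_down: "falling x (Suc j) - falling (x - 1) (Suc j) = real (Suc j) * falling (x - 1) j"
    using falling_forward_difference[of "x - 1" j] by simp
  have d2: "falling x j - falling (x - 1) j = real j * falling (x - 1) i"
    using falling_forward_difference[of "x - 1" i] Suc by simp
  have second: "2 * falling x (Suc j) - falling (x - 1) (Suc j) - falling (x + 1) (Suc j)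
      = - (real (Suc j) * real j * falling (x - 1) i)"
    using d_up d_down d2 by (simp add: algebra_simps)
  have shift: "x * falling (x - 1) i = falling x j" using Suc by (simp add: falling.simps)
  have top: "falling x (Suc j) = falling x j * (x - real j)" by (rule falling_Suc_right)
  have "diff_op m (\<lambda>x. falling x (Suc j)) x
      = - (real (Suc j) * real j / 2) * ((real m - x) * (x * falling (x - 1) i))"
    unfolding diff_op_def by (simp only: second) (simp add: field_simps)
  also have "\<dots> = - (real (Suc j) * real j / 2) * ((real m - real j) * falling x j - falling x (Suc j))"
    unfolding shift top by (simp add: algebra_simps)
  finally show ?thesis unfolding lam_def lower_coeff_def by (simp add: field_simps)
qed

text \<open>Coefficients of the eigenfunction of degree \<open>n + 1\<close>, from the triangular recursion.\<close>
definition eig_coeff :: "nat \<Rightarrow> nat \<Rightarrow> nat \<Rightarrow> real" where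
  "eig_coeff m n j = (\<Prod>i\<in>{j..<n}. lower_coeff m (Suc i) / (lam i - lam n))"

definition eig_poly :: "nat \<Rightarrow> nat \<Rightarrow> real \<Rightarrow> real" where
  "eig_poly m n x = (\<Sum>j\<le>n. eig_coeff m n j * falling x (Suc j))"

lemma eig_coeff_rec:
  assumes "j < n"
  shows "eig_coeff m n j * (lam j - lam n) = eig_coeff m n (Suc j) * lower_coeff m (Suc j)"
proof -
  have "lam j - lam n \<noteq> 0" using lam_sep[OF assms] by simp
  moreover have "eig_coeff m n j = lower_coeff m (Suc j) / (lam j - lam n) * eig_coeff m n (Suc j)"
    unfolding eig_coeff_def using assms by (subst prod.atLeast_Suc_lessThan) auto
  ultimately show ?thesis by simp
qed

lemma eig_coeff_0_nonzero:
  assumes "n < m"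
  shows "eig_coeff m n 0 \<noteq> 0"
proof -
  have "lam i \<noteq> lam n" if "i < n" for i using lam_sep[OF that] by simp
  then show ?thesis
    unfolding eig_coeff_def prod_zero_iff[OF finite_atLeastLessThan]
    using assms by (auto simp: lower_coeff_def)
qed

lemma eig_poly_eigen: "diff_op m (eig_poly m n) x = lam n * eig_poly m n x"
proof -
  let ?c = "eig_coeff m n" and ?F = "falling x"
  have "diff_op m (eig_poly m n) x = (\<Sum>j<Suc n. ?c j * (lam j * ?F (Suc j) - lower_coeff m j * ?F j))"
    unfolding eig_poly_def[abs_def] diff_op_sum diff_op_falling lessThan_Suc_atMost ..
  also have "\<dots> = lam n * eig_poly m n x + (\<Sum>j<Suc n. ?c j * (lam j - lam n) * ?F (Suc j))
      - (\<Sum>j<Suc n. ?c j * lower_coeff m j * ?F j)"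
    unfolding eig_poly_def lessThan_Suc_atMost[symmetric]
    by (simp add: sum_distrib_left sum_subtractf algebra_simps flip: sum.distrib)
  also have "(\<Sum>j<Suc n. ?c j * (lam j - lam n) * ?F (Suc j))
      = (\<Sum>j<n. ?c (Suc j) * lower_coeff m (Suc j) * ?F (Suc j))"
    by (simp add: eig_coeff_rec)
  also have "(\<Sum>j<Suc n. ?c j * lower_coeff m j * ?F j)
      = (\<Sum>j<n. ?c (Suc j) * lower_coeff m (Suc j) * ?F (Suc j))"
    unfolding sum.lessThan_Suc_shift by (simp add: lower_coeff_def)
  finally show ?thesis by simp
qed

lemma eig_poly_0: "eig_poly m n 0 = 0"
  unfolding eig_poly_def by (simp add: falling.simps)

lemma eig_poly_1: "eig_poly m n 1 = eig_coeff m n 0"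
proof -
  have "falling 1 (Suc j) = (if j = 0 then 1 else 0)" for j
    by (cases j) (simp_all add: falling.simps)
  then have "eig_poly m n 1 = (\<Sum>j\<le>n. if j = 0 then eig_coeff m n j else 0)"
    unfolding eig_poly_def by (intro sum.cong) auto
  then show ?thesis by simp
qed

lemma eig_poly_m:
  assumes "1 \<le> n"
  shows "eig_poly m n (real m) = 0"
  using eig_poly_eigen[of m n "real m"] lam_pos[OF assms] by (simp add: diff_op_def)

section \<open>The matrix \<open>A\<close>, its inverse and \<open>v = A\<^sup>-\<^sup>1 1\<close>\<close>

lemma Amat_carrier [simp]: "Amat m \<in> carrier_mat (m - 1) (m - 1)"
  unfolding Amat_def by simp

lemma Amat_dims [simp]: "dim_row (Amat m) = m - 1" "dim_col (Amat m) = m - 1"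
  unfolding Amat_def by simp_all

lemma Amat_entry: "i < m - 1 \<Longrightarrow> j < m - 1 \<Longrightarrow>
    Amat m $$ (i, j) = (if i = j then 2 else if i = j + 1 \<or> j = i + 1 then -1 else 0)"
  unfolding Amat_def by simp

lemma Amat_mult_samples:
  fixes f :: "nat \<Rightarrow> real"
  assumes z: "z \<in> carrier_vec (m - 1)" and i: "i < m - 1"
    and zf: "\<forall>j<m - 1. z $ j = f (j + 1)" and f0: "f 0 = 0" and fm: "f m = 0"
  shows "(Amat m *\<^sub>v z) $ i = 2 * f (i + 1) - f i - f (i + 2)"
proof -
  have "(Amat m *\<^sub>v z) $ i = (\<Sum>j\<in>{0..<m - 1}. Amat m $$ (i, j) * z $ j)"
    using z i by (simp add: mult_mat_vec_def scalar_prod_def row_def)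
  also have "\<dots> = (\<Sum>j\<in>{0..<m - 1}. (if j = i then 2 * f (i + 1) else 0)
        + (if 0 < i \<and> j = i - 1 then - f i else 0) + (if j = i + 1 then - f (i + 2) else 0))"
    using i zf by (intro sum.cong refl) (auto simp: Amat_entry)
  also have "\<dots> = 2 * f (i + 1) + (if 0 < i then - f i else 0)
        + (if i + 1 < m - 1 then - f (i + 2) else 0)"
    using i by (simp add: sum.distrib)
  also have "\<dots> = 2 * f (i + 1) - f i - f (i + 2)"
  proof -
    have "\<not> i + 1 < m - 1 \<Longrightarrow> i + 2 = m" using i by linarith
    then show ?thesis using f0 fm by (cases "i = 0") auto
  qed
  finally show ?thesis .
qed

text \<open>A function with vanishing second difference and zero boundary values is zero, so \<open>A\<close> is
  injective.\<close>
lemma Amat_kernel: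
  assumes m: "m \<ge> 2" and z: "z \<in> carrier_vec (m - 1)" and Az: "Amat m *\<^sub>v z = 0\<^sub>v (m - 1)"
  shows "z = 0\<^sub>v (m - 1)"
proof -
  define f where "f j = (if j = 0 \<or> j \<ge> m then 0 else z $ (j - 1))" for j
  have harmonic: "2 * f (i + 1) - f i - f (i + 2) = 0" if i: "i < m - 1" for i
  proof -
    have "(Amat m *\<^sub>v z) $ i = 2 * f (i + 1) - f i - f (i + 2)"
      by (rule Amat_mult_samples[OF z i]) (auto simp: f_def)
    then show ?thesis using Az i by simp
  qed
  have linear: "j + 1 \<le> m \<longrightarrow> f j = real j * f 1 \<and> f (j + 1) = real (j + 1) * f 1" for j
  proof (induction j)
    case 0 then show ?case by (simp add: f_def)
  next
    case (Suc j)
    show ?case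
    proof
      assume j: "Suc j + 1 \<le> m"
      then have "f j = real j * f 1 \<and> f (j + 1) = real (j + 1) * f 1" using Suc by simp
      moreover have "2 * f (j + 1) - f j - f (j + 2) = 0" using harmonic[of j] j by simp
      ultimately show "f (Suc j) = real (Suc j) * f 1 \<and> f (Suc j + 1) = real (Suc j + 1) * f 1"
        by (simp add: algebra_simps)
    qed
  qed
  have "f m = real m * f 1" using linear[of "m - 1"] m by simp
  then have f1: "f 1 = 0" using m by (simp add: f_def)
  show ?thesis
  proof (rule eq_vecI)
    fix j assume "j < dim_vec (0\<^sub>v (m - 1) :: real vec)"
    then have j: "j < m - 1" by simp
    have "z $ j = f (j + 1)" using j by (simp add: f_def)
    then show "z $ j = 0\<^sub>v (m - 1) $ j" using linear[of "j + 1"] j f1 by simp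
  qed (use z in simp)
qed

lemma Ainv_props:
  assumes m: "m \<ge> 2"
  shows "Ainv m \<in> carrier_mat (m - 1) (m - 1)" "Ainv m * Amat m = 1\<^sub>m (m - 1)"
proof -
  have det: "det (Amat m) \<noteq> 0"
    using Amat_kernel[OF m] det_0_iff_vec_prod_zero[OF Amat_carrier[of m]] by blast
  have "mat_inverse (Amat m) \<noteq> None"
  proof
    assume "mat_inverse (Amat m) = None"
    from mat_inverse(1)[OF Amat_carrier this, where b = "()"]
      det_non_zero_imp_unit[OF Amat_carrier det, where b = "()"]
    show False by blast
  qed
  then obtain B where B: "mat_inverse (Amat m) = Some B" by blast
  from mat_inverse(2)[OF Amat_carrier B]
  show "Ainv m \<in> carrier_mat (m - 1) (m - 1)" "Ainv m * Amat m = 1\<^sub>m (m - 1)"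
    unfolding Ainv_def B by auto
qed

text \<open>The vector \<open>v = A\<^sup>-\<^sup>1 1\<close> has the explicit entries \<open>v\<^sub>j = j (m - j) / 2\<close> (1-based).\<close>
definition vfun :: "nat \<Rightarrow> nat \<Rightarrow> real" where "vfun m j = real j * (real m - real j) / 2"

definition vv :: "nat \<Rightarrow> real vec" where "vv m = vec (m - 1) (\<lambda>j. vfun m (j + 1))"

lemma vfun_pos: "0 < j \<Longrightarrow> j < m \<Longrightarrow> 0 < vfun m j"
  unfolding vfun_def by simp

text \<open>\<open>A v = 1\<close>, i.e. \<open>v = A\<^sup>-\<^sup>1 1\<close>, since \<open>v\<close> is a quadratic with second difference \<open>-1\<close>.\<close>
lemma Amat_vv: "Amat m *\<^sub>v vv m = vec (m - 1) (\<lambda>_. 1)"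
proof (rule eq_vecI)
  fix i assume "i < dim_vec (vec (m - 1) (\<lambda>_. 1 :: real))"
  then have i: "i < m - 1" by simp
  have "(Amat m *\<^sub>v vv m) $ i = 2 * vfun m (i + 1) - vfun m i - vfun m (i + 2)"
    by (rule Amat_mult_samples[OF _ i]) (auto simp: vv_def vfun_def)
  also have "\<dots> = 1" unfolding vfun_def by (simp add: field_simps)
  finally show "(Amat m *\<^sub>v vv m) $ i = vec (m - 1) (\<lambda>_. 1) $ i" using i by simp
qed simp

lemma Ainv_one:
  assumes m: "m \<ge> 2"
  shows "Ainv m *\<^sub>v vec (m - 1) (\<lambda>_. 1) = vv m"
proof -
  have vv: "vv m \<in> carrier_vec (m - 1)" by (simp add: vv_def)
  have "Ainv m *\<^sub>v (Amat m *\<^sub>v vv m) = (Ainv m * Amat m) *\<^sub>v vv m"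
    using Ainv_props[OF m] vv by (intro assoc_mult_mat_vec[symmetric]) auto
  then show ?thesis using Ainv_props[OF m] vv Amat_carrier by (simp add: Amat_vv)
qed

section \<open>The spectrum of \<open>A diag(v)\<close>\<close>

definition Adiag :: "nat \<Rightarrow> real vec \<Rightarrow> real mat" where
  "Adiag m u = mat (m - 1) (m - 1) (\<lambda>(i, j). Amat m $$ (i, j) * u $ j)"

lemma Adiag_carrier [simp]: "Adiag m u \<in> carrier_mat (m - 1) (m - 1)"
  and Adiag_dims [simp]: "dim_row (Adiag m u) = m - 1" "dim_col (Adiag m u) = m - 1"
  unfolding Adiag_def by simp_all

lemma Adiag_vv_samples_eigen:
  assumes u0: "u 0 = 0" and um: "u (real m) = 0" and eig: "\<And>x. diff_op m u x = \<mu> * u x"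
  defines "y \<equiv> vec (m - 1) (\<lambda>j. u (real (j + 1)) / vfun m (j + 1))"
  shows "Adiag m (vv m) *\<^sub>v y = \<mu> \<cdot>\<^sub>v y"
proof (rule eq_vecI)
  have vpos: "vfun m (j + 1) > 0" if "j < m - 1" for j using that by (intro vfun_pos) auto
  fix i assume "i < dim_vec (\<mu> \<cdot>\<^sub>v y)"
  then have i: "i < m - 1" by (simp add: y_def)
  have "(Adiag m (vv m) *\<^sub>v y) $ i = (\<Sum>j\<in>{0..<m - 1}. Adiag m (vv m) $$ (i, j) * y $ j)"
    using i by (simp add: mult_mat_vec_def scalar_prod_def row_def Adiag_def y_def)
  also have "\<dots> = (\<Sum>j\<in>{0..<m - 1}. Amat m $$ (i, j) * u (real (j + 1)))"
  proof (intro sum.cong refl)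
    fix j assume "j \<in> {0..<m - 1}"
    then have j: "j < m - 1" by simp
    show "Adiag m (vv m) $$ (i, j) * y $ j = Amat m $$ (i, j) * u (real (j + 1))"
      using vpos[OF j] i j by (simp add: Adiag_def vv_def y_def)
  qed
  also have "\<dots> = (Amat m *\<^sub>v vec (m - 1) (\<lambda>j. u (real (j + 1)))) $ i"
    using i by (simp add: mult_mat_vec_def scalar_prod_def row_def)
  also have "\<dots> = 2 * u (real (i + 1)) - u (real i) - u (real (i + 2))"
    using u0 um by (intro Amat_mult_samples[OF _ i, of _ "\<lambda>j. u (real j)"]) auto
  also have "\<dots> = \<mu> * u (real (i + 1)) / vfun m (i + 1)"
  proof -
    have "vfun m (i + 1) * (2 * u (real (i + 1)) - u (real i) - u (real (i + 2)))
        = \<mu> * u (real (i + 1))"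
      using eig[of "real (i + 1)"] by (simp add: diff_op_def vfun_def add.commute)
    then show ?thesis using vpos[OF i] by (simp add: field_simps)
  qed
  also have "\<dots> = (\<mu> \<cdot>\<^sub>v y) $ i" using i by (simp add: y_def)
  finally show "(Adiag m (vv m) *\<^sub>v y) $ i = (\<mu> \<cdot>\<^sub>v y) $ i" .
qed (simp add: y_def Adiag_def)

lemma Adiag_vv_eigenvalue:
  assumes n: "1 \<le> n" "n < m"
  shows "eigenvalue (Adiag m (vv m)) (lam n)"
proof -
  define y where "y = vec (m - 1) (\<lambda>j. eig_poly m n (real (j + 1)) / vfun m (j + 1))"
  have "Adiag m (vv m) *\<^sub>v y = lam n \<cdot>\<^sub>v y"
    unfolding y_def using eig_poly_0 eig_poly_m[OF n(1)] eig_poly_eigen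
    by (rule Adiag_vv_samples_eigen)
  moreover have "y $ 0 \<noteq> 0"
    using n vfun_pos[of 1 m] eig_coeff_0_nonzero[OF n(2)] by (simp add: y_def eig_poly_1)
  then have "y \<noteq> 0\<^sub>v (m - 1)" using n by auto
  ultimately have "eigenvector (Adiag m (vv m)) y (lam n)"
    unfolding eigenvector_def by (simp add: y_def)
  then show ?thesis unfolding eigenvalue_def by blast
qed

lemma monic_roots_prod:
  fixes p :: "real poly"
  assumes "degree p = d" "coeff p d = 1" "inj_on \<omega> {1..d}" "\<forall>n\<in>{1..d}. poly p (\<omega> n) = 0"
  shows "p = (\<Prod>n = 1..d. [:- \<omega> n, 1:])"
  using assms
proof (induction d arbitrary: p)
  case 0
  then show ?case using degree_0_id[of p] by (simp add: one_pCons)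
next
  case (Suc d)
  let ?a = "\<omega> (Suc d)"
  have "poly p ?a = 0" using Suc.prems(4) by simp
  then obtain q where pq: "p = [:- ?a, 1:] * q" using poly_eq_0_iff_dvd by (metis dvdE)
  have "q \<noteq> 0" using Suc.prems(2) pq by auto
  then have "degree ([:- ?a, 1:] * q) = degree [:- ?a, 1:] + degree q" by (intro degree_mult_eq) auto
  then have dq: "degree q = d" using Suc.prems(1) pq by simp
  have "lead_coeff p = lead_coeff q" by (simp only: pq lead_coeff_mult) simp
  then have cq: "coeff q d = 1" using Suc.prems(1,2) dq by simp
  have rq: "\<forall>n\<in>{1..d}. poly q (\<omega> n) = 0"
  proof
    fix n assume n: "n \<in> {1..d}"
    have "\<omega> n \<noteq> ?a" using Suc.prems(3) n by (auto dest: inj_onD)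
    then show "poly q (\<omega> n) = 0" using Suc.prems(4) n pq by auto
  qed
  have iq: "inj_on \<omega> {1..d}" using Suc.prems(3) by (rule inj_on_subset) auto
  show ?case using Suc.IH[OF dq cq iq rq] pq by (simp add: mult.commute)
qed

lemma char_poly_Adiag_vv: "char_poly (Adiag m (vv m)) = (\<Prod>n = 1..m - 1. [:- lam n, 1:])"
proof (rule monic_roots_prod)
  show "degree (char_poly (Adiag m (vv m))) = m - 1" "coeff (char_poly (Adiag m (vv m))) (m - 1) = 1"
    using degree_monic_char_poly[OF Adiag_carrier] by auto
  show "\<forall>n\<in>{1..m - 1}. poly (char_poly (Adiag m (vv m))) (lam n) = 0"
    using Adiag_vv_eigenvalue eigenvalue_root_char_poly[OF Adiag_carrier] by auto
qed (rule lam_inj)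

lemma poly_pderiv_linear_factors:
  fixes r :: "'a \<Rightarrow> real"
  assumes S: "finite S" and n: "n \<in> S"
  shows "poly (pderiv (\<Prod>a\<in>S. [:- r a, 1:])) (r n) = (\<Prod>a\<in>S - {n}. r n - r a)"
proof -
  have "poly (pderiv (\<Prod>a\<in>S. [:- r a, 1:])) (r n) = (\<Sum>a\<in>S. \<Prod>b\<in>S - {a}. r n - r b)"
    by (simp add: pderiv_prod poly_sum poly_prod pderiv_pCons)
  also have "\<dots> = (\<Prod>b\<in>S - {n}. r n - r b) + (\<Sum>a\<in>S - {n}. \<Prod>b\<in>S - {a}. r n - r b)"
    by (rule sum.remove[OF S n])
  also have "(\<Sum>a\<in>S - {n}. \<Prod>b\<in>S - {a}. r n - r b) = 0"
    using S n by (intro sum.neutral ballI prod_zero) auto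
  finally show ?thesis by simp
qed

lemma Adiag_vv_simple:
  assumes n: "n \<in> {1..m - 1}"
  shows "poly (pderiv (char_poly (Adiag m (vv m)))) (lam n) \<noteq> 0"
proof -
  have "\<forall>a\<in>{1..m - 1} - {n}. lam n - lam a \<noteq> 0" using lam_inj[of "{1..m - 1}"] n by (auto dest: inj_onD)
  then show ?thesis
    unfolding char_poly_Adiag_vv poly_pderiv_linear_factors[OF finite_atLeastAtMost n]
    by (simp add: prod_zero_iff)
qed

section \<open>Perturbation of a simple real eigenvalue\<close>

lemma tendsto_prod_difference_quotient:
  fixes a :: "'i \<Rightarrow> real" and b :: "'e \<Rightarrow> 'i \<Rightarrow> real" and h :: "'e \<Rightarrow> real"
  assumes S: "finite S" and h: "(h \<longlongrightarrow> 0) F" and hne: "\<forall>\<^sub>F e in F. h e \<noteq> 0"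
    and b: "\<forall>i\<in>S. ((\<lambda>e. b e i) \<longlongrightarrow> \<beta> i) F"
  shows "((\<lambda>e. ((\<Prod>i\<in>S. a i + h e * b e i) - (\<Prod>i\<in>S. a i)) / h e)
          \<longlongrightarrow> (\<Sum>j\<in>S. \<beta> j * (\<Prod>i\<in>S - {j}. a i))) F"
  using S b
proof (induction S rule: finite_induct)
  case empty then show ?case by simp
next
  case (insert k S)
  let ?P = "\<lambda>e. \<Prod>i\<in>S. a i + h e * b e i" and ?A = "\<Prod>i\<in>S. a i"
  have IH: "((\<lambda>e. (?P e - ?A) / h e) \<longlongrightarrow> (\<Sum>j\<in>S. \<beta> j * (\<Prod>i\<in>S - {j}. a i))) F"
    using insert by auto
  have "(?P \<longlongrightarrow> (\<Prod>i\<in>S. a i + 0 * \<beta> i)) F"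
    using insert.prems h by (intro tendsto_prod tendsto_add tendsto_mult tendsto_const) auto
  then have PA: "(?P \<longlongrightarrow> ?A) F" by simp
  have bk: "((\<lambda>e. b e k) \<longlongrightarrow> \<beta> k) F" using insert.prems by auto
  have lim: "((\<lambda>e. b e k * ?P e + a k * ((?P e - ?A) / h e)) \<longlongrightarrow>
       \<beta> k * ?A + a k * (\<Sum>j\<in>S. \<beta> j * (\<Prod>i\<in>S - {j}. a i))) F"
    by (intro tendsto_add tendsto_mult tendsto_const bk PA IH)
  have "(\<Sum>j\<in>S. \<beta> j * (\<Prod>i\<in>insert k S - {j}. a i)) = (\<Sum>j\<in>S. a k * (\<beta> j * (\<Prod>i\<in>S - {j}. a i)))"
  proof (intro sum.cong refl)
    fix j assume "j \<in> S"
    then have "insert k S - {j} = insert k (S - {j})" using insert.hyps by auto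
    then show "\<beta> j * (\<Prod>i\<in>insert k S - {j}. a i) = a k * (\<beta> j * (\<Prod>i\<in>S - {j}. a i))"
      using insert.hyps by simp
  qed
  moreover have "insert k S - {k} = S" using insert.hyps by auto
  ultimately have sum_eq: "(\<Sum>j\<in>insert k S. \<beta> j * (\<Prod>i\<in>insert k S - {j}. a i))
      = \<beta> k * ?A + a k * (\<Sum>j\<in>S. \<beta> j * (\<Prod>i\<in>S - {j}. a i))"
    using insert.hyps by (simp add: sum_distrib_left)
  show ?case unfolding sum_eq
  proof (rule Lim_transform_eventually[OF lim])
    show "\<forall>\<^sub>F e in F. b e k * ?P e + a k * ((?P e - ?A) / h e) =
       ((\<Prod>i\<in>insert k S. a i + h e * b e i) - (\<Prod>i\<in>insert k S. a i)) / h e"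
      using hne by eventually_elim (use insert.hyps in \<open>simp add: field_simps\<close>)
  qed
qed

lemma det_mat_expansion:
  "det (mat k k (\<lambda>(i, j). f i j)) = (\<Sum>p | p permutes {0..<k}. signof p * (\<Prod>i = 0..<k. f i (p i)))"
proof -
  have "det (mat k k (\<lambda>(i, j). f i j))
      = (\<Sum>p | p permutes {0..<k}. signof p * (\<Prod>i = 0..<k. mat k k (\<lambda>(i, j). f i j) $$ (i, p i)))"
    by (rule det_def') simp
  also have "\<dots> = (\<Sum>p | p permutes {0..<k}. signof p * (\<Prod>i = 0..<k. f i (p i)))"
  proof (intro sum.cong refl arg_cong2[where f = "(*)"] prod.cong)
    fix p i assume "p \<in> {p. p permutes {0..<k}}" "i \<in> {0..<k}"
    then have "p i < k" "i < k" by (auto simp: permutes_in_image)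
    then show "mat k k (\<lambda>(i, j). f i j) $$ (i, p i) = f i (p i)" by simp
  qed
  finally show ?thesis .
qed

definition kron :: "nat \<Rightarrow> nat \<Rightarrow> real" where "kron i j = (if i = j then 1 else 0)"

text \<open>Directional derivative of the determinant at the matrix \<open>a\<close> in the direction \<open>\<beta>\<close>.\<close>
definition det_dir_deriv :: "nat \<Rightarrow> (nat \<Rightarrow> nat \<Rightarrow> real) \<Rightarrow> (nat \<Rightarrow> nat \<Rightarrow> real) \<Rightarrow> real" where
  "det_dir_deriv k a \<beta> = (\<Sum>p | p permutes {0..<k}.
     signof p * (\<Sum>j\<in>{0..<k}. \<beta> j (p j) * (\<Prod>i\<in>{0..<k} - {j}. a i (p i))))"

lemma det_dir_deriv_linear:
  "det_dir_deriv k a (\<lambda>i j. t * kron i j - g i j) = t * det_dir_deriv k a kron - det_dir_deriv k a g"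
  unfolding det_dir_deriv_def
  by (simp add: sum_subtractf sum_distrib_left algebra_simps flip: sum.distrib)

lemma det_deriv_tendsto:
  fixes b :: "'e \<Rightarrow> nat \<Rightarrow> nat \<Rightarrow> real"
  assumes h: "(h \<longlongrightarrow> 0) F" and hne: "\<forall>\<^sub>F e in F. h e \<noteq> 0"
    and b: "\<forall>i<k. \<forall>j<k. ((\<lambda>e. b e i j) \<longlongrightarrow> \<beta> i j) F"
  shows "((\<lambda>e. (det (mat k k (\<lambda>(i, j). a i j + h e * b e i j)) - det (mat k k (\<lambda>(i, j). a i j))) / h e)
          \<longlongrightarrow> det_dir_deriv k a \<beta>) F"
proof -
  have expand: "(det (mat k k (\<lambda>(i, j). a i j + h e * b e i j)) - det (mat k k (\<lambda>(i, j). a i j))) / h e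
     = (\<Sum>p | p permutes {0..<k}. signof p *
         (((\<Prod>i\<in>{0..<k}. a i (p i) + h e * b e i (p i)) - (\<Prod>i\<in>{0..<k}. a i (p i))) / h e))" for e
  proof -
    let ?X = "\<lambda>p. signof p * (\<Prod>i\<in>{0..<k}. a i (p i) + h e * b e i (p i)) :: real"
    let ?Y = "\<lambda>p. signof p * (\<Prod>i\<in>{0..<k}. a i (p i)) :: real"
    have "(\<Sum>p | p permutes {0..<k}. signof p *
         (((\<Prod>i\<in>{0..<k}. a i (p i) + h e * b e i (p i)) - (\<Prod>i\<in>{0..<k}. a i (p i))) / h e))
       = (\<Sum>p | p permutes {0..<k}. (?X p - ?Y p) / h e)"
      by (intro sum.cong refl) (simp add: right_diff_distrib)
    also have "\<dots> = ((\<Sum>p | p permutes {0..<k}. ?X p) - (\<Sum>p | p permutes {0..<k}. ?Y p)) / h e"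
      by (simp only: sum_divide_distrib[symmetric] sum_subtractf)
    finally show ?thesis unfolding det_mat_expansion by simp
  qed
  show ?thesis unfolding expand det_dir_deriv_def
  proof (intro tendsto_sum tendsto_mult_left)
    fix p assume "p \<in> {p. p permutes {0..<k}}"
    then have "\<forall>i\<in>{0..<k}. p i < k" by (auto simp: permutes_in_image)
    then show "((\<lambda>e. ((\<Prod>i\<in>{0..<k}. a i (p i) + h e * b e i (p i)) - (\<Prod>i\<in>{0..<k}. a i (p i))) / h e)
         \<longlongrightarrow> (\<Sum>j\<in>{0..<k}. \<beta> j (p j) * (\<Prod>i\<in>{0..<k} - {j}. a i (p i)))) F"
      using b by (intro tendsto_prod_difference_quotient[OF _ h hne]) auto
  qed
qed

lemma poly_char_poly_det:
  assumes M: "(M :: real mat) \<in> carrier_mat k k"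
  shows "poly (char_poly M) \<mu> = det (mat k k (\<lambda>(i, j). (if i = j then \<mu> else 0) - M $$ (i, j)))"
proof -
  have "- char_matrix M \<mu> = mat k k (\<lambda>(i, j). (if i = j then \<mu> else 0) - M $$ (i, j))"
    using M by (intro eq_matI) (auto simp: char_matrix_def)
  then show ?thesis using char_poly_matrix[OF M] by simp
qed

text \<open>First-order expansion of the characteristic polynomial of \<open>B + h G\<close> near a root \<open>\<mu>\<^sub>0\<close> of that of
  \<open>B\<close>, on the scale \<open>\<mu> = \<mu>\<^sub>0 + s h\<close>: the leading coefficient in \<open>s\<close> is the derivative at \<open>\<mu>\<^sub>0\<close>.\<close>
lemma char_poly_perturbation_limit:
  fixes B :: "real mat" and h :: "'e \<Rightarrow> real" and G :: "'e \<Rightarrow> nat \<Rightarrow> nat \<Rightarrow> real"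
  assumes B: "B \<in> carrier_mat k k" and root: "poly (char_poly B) \<mu>0 = 0"
    and h: "(h \<longlongrightarrow> 0) F" and hne: "\<forall>\<^sub>F e in F. h e \<noteq> 0"
    and G: "\<forall>i<k. \<forall>j<k. ((\<lambda>e. G e i j) \<longlongrightarrow> G0 i j) F"
  shows "((\<lambda>e. poly (char_poly (mat k k (\<lambda>(i, j). B $$ (i, j) + h e * G e i j))) (\<mu>0 + s * h e) / h e)
          \<longlongrightarrow> s * poly (pderiv (char_poly B)) \<mu>0 - det_dir_deriv k (\<lambda>i j. \<mu>0 * kron i j - B $$ (i, j)) G0) F"
proof -
  define a where "a i j = \<mu>0 * kron i j - B $$ (i, j)" for i j
  have P_det: "poly (char_poly (mat k k (\<lambda>(i, j). B $$ (i, j) + h e * G e i j))) (\<mu>0 + s * h e)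
      = det (mat k k (\<lambda>(i, j). a i j + h e * (s * kron i j - G e i j)))" for e
    by (subst poly_char_poly_det[of _ k])
      (auto simp: a_def kron_def algebra_simps intro!: arg_cong[where f = det] eq_matI)
  have char_det: "poly (char_poly B) (\<mu>0 + t) = det (mat k k (\<lambda>(i, j). a i j + t * kron i j))" for t
    unfolding poly_char_poly_det[OF B]
    by (auto simp: a_def kron_def algebra_simps intro!: arg_cong[where f = det] eq_matI)
  have det_a: "det (mat k k (\<lambda>(i, j). a i j)) = 0" using char_det[of 0] root by simp
  text \<open>Differentiating along the identity recovers the derivative of the characteristic polynomial.\<close>
  have D1: "det_dir_deriv k a kron = poly (pderiv (char_poly B)) \<mu>0"
  proof -
    let ?Q = "\<lambda>t. (det (mat k k (\<lambda>(i, j). a i j + t * kron i j)) - det (mat k k (\<lambda>(i, j). a i j))) / t"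
    have "(?Q \<longlongrightarrow> det_dir_deriv k a kron) (at 0)"
      by (rule det_deriv_tendsto) (auto simp: eventually_at_filter)
    moreover have "((\<lambda>t. (poly (char_poly B) (\<mu>0 + t) - poly (char_poly B) \<mu>0) / t)
        \<longlongrightarrow> poly (pderiv (char_poly B)) \<mu>0) (at 0)"
      using poly_DERIV[of "char_poly B" \<mu>0] by (simp only: DERIV_def)
    then have "(?Q \<longlongrightarrow> poly (pderiv (char_poly B)) \<mu>0) (at 0)" by (simp only: char_det det_a root)
    ultimately show ?thesis by (rule tendsto_unique[rotated]) simp
  qed
  have "((\<lambda>e. (det (mat k k (\<lambda>(i, j). a i j + h e * (s * kron i j - G e i j)))
          - det (mat k k (\<lambda>(i, j). a i j))) / h e) \<longlongrightarrow> det_dir_deriv k a (\<lambda>i j. s * kron i j - G0 i j)) F"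
    using G by (intro det_deriv_tendsto[OF h hne]) (auto intro!: tendsto_diff tendsto_const)
  then have "((\<lambda>e. poly (char_poly (mat k k (\<lambda>(i, j). B $$ (i, j) + h e * G e i j))) (\<mu>0 + s * h e) / h e)
      \<longlongrightarrow> s * poly (pderiv (char_poly B)) \<mu>0 - det_dir_deriv k a G0) F"
    unfolding P_det det_a det_dir_deriv_linear D1 by simp
  then show ?thesis unfolding a_def .
qed

text \<open>If the values of continuous functions \<open>f\<^sub>e\<close> at \<open>\<mu>\<^sub>0 + s h\<^sub>e\<close>, divided by \<open>h\<^sub>e \<rightarrow> 0\<^sup>+\<close>, tend to an affine
  function of \<open>s\<close> with non-zero slope, then \<open>f\<^sub>e\<close> has a root within \<open>O(h\<^sub>e)\<close> of \<open>\<mu>\<^sub>0\<close>: it changes sign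
  between \<open>\<mu>\<^sub>0 - K h\<^sub>e\<close> and \<open>\<mu>\<^sub>0 + K h\<^sub>e\<close> for large \<open>K\<close>.\<close>
lemma root_near_by_sign_change:
  fixes f :: "'e \<Rightarrow> real \<Rightarrow> real" and h :: "'e \<Rightarrow> real"
  assumes cont: "\<And>e. continuous_on UNIV (f e)" and hpos: "\<forall>\<^sub>F e in F. h e > 0"
    and lim: "\<And>s. ((\<lambda>e. f e (\<mu>0 + s * h e) / h e) \<longlongrightarrow> s * D1 - D0) F" and D1: "D1 \<noteq> 0"
  shows "\<exists>K. \<forall>\<^sub>F e in F. \<exists>\<mu>. \<bar>\<mu> - \<mu>0\<bar> \<le> K * h e \<and> f e \<mu> = 0"
proof -
  define K where "K = (\<bar>D0\<bar> + 1) / \<bar>D1\<bar>"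
  have KD: "K * \<bar>D1\<bar> = \<bar>D0\<bar> + 1" and Kpos: "K > 0" unfolding K_def using D1 by auto
  have "(K * D1 - D0) * ((- K) * D1 - D0) = D0\<^sup>2 - (K * \<bar>D1\<bar>)\<^sup>2"
    by (simp add: algebra_simps power2_eq_square abs_mult_self_eq)
  also have "\<dots> < 0" unfolding KD by (simp add: power2_eq_square algebra_simps)
  finally have "\<forall>\<^sub>F e in F. f e (\<mu>0 + K * h e) / h e * (f e (\<mu>0 + (- K) * h e) / h e) < 0"
    using tendsto_mult[OF lim lim] by (rule order_tendstoD[rotated])
  then have "\<forall>\<^sub>F e in F. \<exists>\<mu>. \<bar>\<mu> - \<mu>0\<bar> \<le> K * h e \<and> f e \<mu> = 0"
    using hpos
  proof eventually_elim
    case (elim e)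
    let ?a = "\<mu>0 - K * h e" and ?b = "\<mu>0 + K * h e"
    have ab: "?a \<le> ?b" using elim(2) Kpos by simp
    have "f e ?b * f e ?a / (h e * h e) < 0" using elim(1) by simp
    then have "f e ?b * f e ?a < 0" using elim(2) by (simp add: divide_less_0_iff)
    then have "(f e ?a \<le> 0 \<and> 0 \<le> f e ?b) \<or> (f e ?b \<le> 0 \<and> 0 \<le> f e ?a)"
      by (auto simp: mult_less_0_iff)
    then obtain \<mu> where "?a \<le> \<mu>" "\<mu> \<le> ?b" "f e \<mu> = 0"
      using IVT'[of "f e" ?a 0 ?b] IVT2'[of "f e" ?b 0 ?a] ab continuous_on_subset[OF cont] by blast
    then show ?case by (intro exI[of _ \<mu>]) auto
  qed
  then show ?thesis by blast
qed

lemma simple_root_perturbation: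
  fixes B :: "real mat" and h :: "'e \<Rightarrow> real" and G :: "'e \<Rightarrow> nat \<Rightarrow> nat \<Rightarrow> real"
  assumes B: "B \<in> carrier_mat k k"
    and root: "poly (char_poly B) \<mu>0 = 0" and simple: "poly (pderiv (char_poly B)) \<mu>0 \<noteq> 0"
    and h: "(h \<longlongrightarrow> 0) F" and hpos: "\<forall>\<^sub>F e in F. h e > 0"
    and G: "\<forall>i<k. \<forall>j<k. ((\<lambda>e. G e i j) \<longlongrightarrow> G0 i j) F"
  shows "\<exists>K. \<forall>\<^sub>F e in F. \<exists>\<mu>. \<bar>\<mu> - \<mu>0\<bar> \<le> K * h e \<and>
           poly (char_poly (mat k k (\<lambda>(i, j). B $$ (i, j) + h e * G e i j))) \<mu> = 0"
proof (rule root_near_by_sign_change[OF _ hpos _ simple])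
  have "\<forall>\<^sub>F e in F. h e \<noteq> 0" using hpos by eventually_elim simp
  then show "((\<lambda>e. poly (char_poly (mat k k (\<lambda>(i, j). B $$ (i, j) + h e * G e i j))) (\<mu>0 + s * h e) / h e)
      \<longlongrightarrow> s * poly (pderiv (char_poly B)) \<mu>0 - det_dir_deriv k (\<lambda>i j. \<mu>0 * kron i j - B $$ (i, j)) G0) F"
    for s by (rule char_poly_perturbation_limit[OF B root h _ G])
qed (intro continuous_on_poly continuous_on_id)

section \<open>Assembling the eigenvalues of \<open>2 I + 2 A diag(w)\<close>\<close>

lemma eventually_common_bound:
  fixes Q :: "'n \<Rightarrow> 'e \<Rightarrow> real \<Rightarrow> bool"
  assumes S: "finite S" and ex: "\<forall>n\<in>S. \<exists>K. \<forall>\<^sub>F e in F. Q n e K"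
    and mono: "\<And>n e K K'. K \<le> K' \<Longrightarrow> Q n e K \<Longrightarrow> Q n e K'"
  shows "\<exists>C. \<forall>\<^sub>F e in F. \<forall>n\<in>S. Q n e C"
proof -
  from bchoice[OF ex] obtain K where K: "\<forall>n\<in>S. \<forall>\<^sub>F e in F. Q n e (K n)" by (elim exE)
  define C where "C = (\<Sum>n\<in>S. \<bar>K n\<bar>)"
  have KC: "K n \<le> C" if "n \<in> S" for n
  proof -
    have "\<bar>K n\<bar> \<le> C" unfolding C_def using S that by (intro member_le_sum) auto
    then show ?thesis using abs_ge_self[of "K n"] by linarith
  qed
  have "\<forall>n\<in>S. \<forall>\<^sub>F e in F. Q n e C"
  proof
    fix n assume n: "n \<in> S"
    show "\<forall>\<^sub>F e in F. Q n e C"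
    proof (rule eventually_mono)
      show "\<forall>\<^sub>F e in F. Q n e (K n)" using K n by blast
    qed (rule mono[OF KC[OF n]])
  qed
  then show ?thesis by (intro exI[of _ C] eventually_ball_finite[OF S])
qed

lemma factor_by_separated_roots:
  fixes p :: "real poly"
  assumes deg: "degree p = k" and monic: "coeff p k = 1"
    and roots: "\<forall>n\<in>{1..k}. poly p (\<omega> n) = 0 \<and> \<bar>\<omega> n - t n\<bar> \<le> C"
    and sep: "\<forall>a\<in>{1..k}. \<forall>b\<in>{1..k}. a \<noteq> b \<longrightarrow> 2 * C < \<bar>t a - t b\<bar>"
  shows "p = (\<Prod>n = 1..k. [:- \<omega> n, 1:])"
proof (rule monic_roots_prod[OF deg monic])
  show "inj_on \<omega> {1..k}"
  proof (rule inj_onI, rule ccontr)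
    fix a b assume a: "a \<in> {1..k}" and b: "b \<in> {1..k}" and eq: "\<omega> a = \<omega> b" and "a \<noteq> b"
    then have "2 * C < \<bar>t a - t b\<bar>" using sep by blast
    moreover have "\<bar>\<omega> a - t a\<bar> \<le> C" "\<bar>\<omega> b - t b\<bar> \<le> C" using roots a b by auto
    moreover have "\<bar>t a - t b\<bar> \<le> \<bar>\<omega> b - t b\<bar> + \<bar>\<omega> a - t a\<bar>"
      using eq abs_triangle_ineq4[of "\<omega> b - t b" "\<omega> a - t a"] by simp
    ultimately show False by linarith
  qed
qed (use roots in auto)

lemma poly_char_poly_affine:
  fixes M :: "real mat"
  assumes M: "M \<in> carrier_mat k k"
  shows "poly (char_poly (mat k k (\<lambda>(i, j). (if i = j then a else 0) + b * M $$ (i, j)))) (a + b * \<mu>)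
       = b ^ k * poly (char_poly M) \<mu>"
proof -
  let ?N = "mat k k (\<lambda>(i, j). (if i = j then a else 0) + b * M $$ (i, j))"
  have "poly (char_poly ?N) (a + b * \<mu>) = det (mat k k (\<lambda>(i, j). (if i = j then a + b * \<mu> else 0) - ?N $$ (i, j)))"
    by (rule poly_char_poly_det[of ?N k]) simp
  also have "mat k k (\<lambda>(i, j). (if i = j then a + b * \<mu> else 0) - ?N $$ (i, j))
      = b \<cdot>\<^sub>m mat k k (\<lambda>(i, j). (if i = j then \<mu> else 0) - M $$ (i, j))"
    by (intro eq_matI) (auto simp: algebra_simps)
  also have "det \<dots> = b ^ k * poly (char_poly M) \<mu>" by (simp add: poly_char_poly_det[OF M])
  finally show ?thesis .
qed

lemma eig_mat_char_poly_scaled: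
  assumes u: "u \<in> carrier_vec (m - 1)"
  shows "poly (char_poly (eig_mat m (L \<cdot>\<^sub>v u))) (2 + 2 * L * \<mu>)
       = (2 * L) ^ (m - 1) * poly (char_poly (Adiag m u)) \<mu>"
proof -
  have "eig_mat m (L \<cdot>\<^sub>v u)
      = mat (m - 1) (m - 1) (\<lambda>(i, j). (if i = j then 2 else 0) + 2 * L * Adiag m u $$ (i, j))"
    using u by (intro eq_matI) (auto simp: eig_mat_def Adiag_def)
  then show ?thesis by (simp only: poly_char_poly_affine[OF Adiag_carrier])
qed

lemma eig_mat_root_near:
  fixes L :: "'e \<Rightarrow> real" and r :: "'e \<Rightarrow> real vec"
  assumes n: "n \<in> {1..m - 1}" and L: "filterlim L at_top F"
    and r_dim: "\<forall>\<^sub>F e in F. r e \<in> carrier_vec (m - 1)"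
    and r_lim: "\<forall>j<m - 1. ((\<lambda>e. r e $ j) \<longlongrightarrow> r0 j) F"
  shows "\<exists>K. \<forall>\<^sub>F e in F. \<exists>\<omega>. poly (char_poly (eig_mat m (L e \<cdot>\<^sub>v vv m + r e))) \<omega> = 0 \<and>
           \<bar>\<omega> - (2 + 2 * L e * lam n)\<bar> \<le> K"
proof -
  define h where "h e = inverse (L e)" for e
  define G where "G e i j = Amat m $$ (i, j) * r e $ j" for e i j
  have Lpos: "\<forall>\<^sub>F e in F. 0 < L e" using L by (simp add: filterlim_at_top_dense)
  have h: "(h \<longlongrightarrow> 0) F" unfolding h_def by (rule tendsto_inverse_0_at_top[OF L])
  have hpos: "\<forall>\<^sub>F e in F. 0 < h e" using Lpos by eventually_elim (simp add: h_def)
  have G: "\<forall>i<m - 1. \<forall>j<m - 1. ((\<lambda>e. G e i j) \<longlongrightarrow> Amat m $$ (i, j) * r0 j) F"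
    unfolding G_def using r_lim by (auto intro!: tendsto_mult_left)
  have root: "poly (char_poly (Adiag m (vv m))) (lam n) = 0"
    using Adiag_vv_eigenvalue[of n m] n eigenvalue_root_char_poly[OF Adiag_carrier] by auto
  obtain K where K: "\<forall>\<^sub>F e in F. \<exists>\<mu>. \<bar>\<mu> - lam n\<bar> \<le> K * h e \<and>
      poly (char_poly (mat (m - 1) (m - 1) (\<lambda>(i, j). Adiag m (vv m) $$ (i, j) + h e * G e i j))) \<mu> = 0"
    using simple_root_perturbation[OF Adiag_carrier root Adiag_vv_simple[OF n] h hpos G] by blast
  have "\<forall>\<^sub>F e in F. \<exists>\<omega>. poly (char_poly (eig_mat m (L e \<cdot>\<^sub>v vv m + r e))) \<omega> = 0 \<and>
           \<bar>\<omega> - (2 + 2 * L e * lam n)\<bar> \<le> 2 * K"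
    using K Lpos r_dim
  proof eventually_elim
    case (elim e)
    then obtain \<mu> where \<mu>: "\<bar>\<mu> - lam n\<bar> \<le> K * h e"
      "poly (char_poly (mat (m - 1) (m - 1) (\<lambda>(i, j). Adiag m (vv m) $$ (i, j) + h e * G e i j))) \<mu> = 0"
      by blast
    let ?u = "vv m + h e \<cdot>\<^sub>v r e"
    have u: "?u \<in> carrier_vec (m - 1)" using elim(3) by (simp add: vv_def)
    have w: "L e \<cdot>\<^sub>v vv m + r e = L e \<cdot>\<^sub>v ?u"
      using elim(2,3) by (intro eq_vecI) (auto simp: h_def vv_def algebra_simps)
    have "Adiag m ?u = mat (m - 1) (m - 1) (\<lambda>(i, j). Adiag m (vv m) $$ (i, j) + h e * G e i j)"
      using elim(3) by (intro eq_matI) (auto simp: Adiag_def G_def vv_def algebra_simps)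
    then have "poly (char_poly (eig_mat m (L e \<cdot>\<^sub>v vv m + r e))) (2 + 2 * L e * \<mu>) = 0"
      unfolding w eig_mat_char_poly_scaled[OF u] using \<mu>(2) by simp
    moreover have "\<bar>(2 + 2 * L e * \<mu>) - (2 + 2 * L e * lam n)\<bar> = 2 * L e * \<bar>\<mu> - lam n\<bar>"
      using elim(2) by (simp add: abs_mult flip: right_diff_distrib)
    moreover have "2 * L e * \<bar>\<mu> - lam n\<bar> \<le> 2 * L e * (K * h e)" using \<mu>(1) elim(2) by simp
    moreover have "2 * L e * (K * h e) = 2 * K" using elim(2) by (simp add: h_def)
    ultimately show ?case by (intro exI[of _ "2 + 2 * L e * \<mu>"]) auto
  qed
  then show ?thesis by blast
qed

text \<open>The spectral asymptotics for \<open>w = L v + r\<close>: for large \<open>L\<close> the targets \<open>2 + 2 L lam n\<close> are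
  further apart than twice the common bound, so the roots found are all the eigenvalues.\<close>
lemma eig_mat_spectrum:
  fixes L :: "'e \<Rightarrow> real" and r :: "'e \<Rightarrow> real vec"
  assumes L: "filterlim L at_top F"
    and r_dim: "\<forall>\<^sub>F e in F. r e \<in> carrier_vec (m - 1)"
    and r_lim: "\<forall>j<m - 1. ((\<lambda>e. r e $ j) \<longlongrightarrow> r0 j) F"
  shows "\<exists>C. \<forall>\<^sub>F e in F. \<exists>\<omega> :: nat \<Rightarrow> real.
           char_poly (eig_mat m (L e \<cdot>\<^sub>v vv m + r e)) = (\<Prod>n = 1..m - 1. [:- \<omega> n, 1:]) \<and>
           (\<forall>n\<in>{1..m - 1}. \<bar>\<omega> n - (2 + 2 * L e * lam n)\<bar> \<le> C)"
proof -
  let ?M = "\<lambda>e. eig_mat m (L e \<cdot>\<^sub>v vv m + r e)" and ?t = "\<lambda>e n. 2 + 2 * L e * lam n"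
  obtain C where C: "\<forall>\<^sub>F e in F. \<forall>n\<in>{1..m - 1}. \<exists>\<omega>. poly (char_poly (?M e)) \<omega> = 0 \<and> \<bar>\<omega> - ?t e n\<bar> \<le> C"
    using eventually_common_bound[of "{1..m - 1}" "\<lambda>n e K. \<exists>\<omega>. poly (char_poly (?M e)) \<omega> = 0 \<and> \<bar>\<omega> - ?t e n\<bar> \<le> K"]
      eig_mat_root_near[OF _ L r_dim r_lim] by fastforce
  have "\<forall>\<^sub>F e in F. max C 0 < L e" using L filterlim_at_top_dense by blast
  then have "\<forall>\<^sub>F e in F. \<exists>\<omega>. char_poly (?M e) = (\<Prod>n = 1..m - 1. [:- \<omega> n, 1:]) \<and>
               (\<forall>n\<in>{1..m - 1}. \<bar>\<omega> n - ?t e n\<bar> \<le> C)"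
    using C
  proof eventually_elim
    case (elim e)
    from bchoice[OF elim(2)] obtain \<omega>
      where \<omega>: "\<forall>n\<in>{1..m - 1}. poly (char_poly (?M e)) (\<omega> n) = 0 \<and> \<bar>\<omega> n - ?t e n\<bar> \<le> C" by blast
    have sep: "2 * C < \<bar>?t e a - ?t e b\<bar>" if "a \<noteq> b" for a b
    proof -
      have "1 \<le> \<bar>lam a - lam b\<bar>" using that lam_sep[of a b] lam_sep[of b a] by (cases "a < b") auto
      then have "2 * L e \<le> 2 * L e * \<bar>lam a - lam b\<bar>" using elim(1) by simp
      also have "\<dots> = \<bar>?t e a - ?t e b\<bar>" using elim(1) by (simp add: abs_mult flip: right_diff_distrib)
      finally show ?thesis using elim(1) by simp
    qed
    have "char_poly (?M e) = (\<Prod>n = 1..m - 1. [:- \<omega> n, 1:])"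
    proof (rule factor_by_separated_roots[OF _ _ \<omega>])
      have "?M e \<in> carrier_mat (m - 1) (m - 1)" by (simp add: eig_mat_def)
      then show "degree (char_poly (?M e)) = m - 1" "coeff (char_poly (?M e)) (m - 1) = 1"
        using degree_monic_char_poly by blast+
    qed (use sep in blast)
    then show ?case using \<omega> by blast
  qed
  then show ?thesis by blast
qed

definition LL :: "real \<Rightarrow> real" where "LL \<epsilon> = - 2 * ln \<epsilon> - ln \<bar>ln \<epsilon>\<bar> + 2 * ln 2"

lemma LL_at_top: "filterlim LL at_top (at_right 0)"
proof -
  have "\<forall>\<^sub>F \<epsilon> in at_right (0::real). - ln \<epsilon> \<le> LL \<epsilon>"
    unfolding eventually_at_right_field
  proof (intro exI[of _ 1] conjI allI impI)
    fix \<epsilon> :: real assume \<epsilon>: "0 < \<epsilon>" "\<epsilon> < 1"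
    then have "0 < - ln \<epsilon>" by simp
    then have "ln (- ln \<epsilon>) \<le> - ln \<epsilon> - 1" by (rule ln_le_minus_one)
    moreover have "ln \<bar>ln \<epsilon>\<bar> = ln (- ln \<epsilon>)" using \<epsilon> by simp
    moreover have "0 < ln (2::real)" by simp
    ultimately show "- ln \<epsilon> \<le> LL \<epsilon>" unfolding LL_def by linarith
  qed simp
  moreover have "filterlim (\<lambda>\<epsilon>. - ln \<epsilon>) at_top (at_right (0::real))"
    using ln_at_0 filterlim_uminus_at_top[of "\<lambda>\<epsilon>. - ln \<epsilon>"] by simp
  ultimately show ?thesis by (rule filterlim_at_top_mono[rotated])
qed

lemma tendsto_Ainv_deviation:
  fixes y :: "'e \<Rightarrow> real vec" and L :: "'e \<Rightarrow> real"
  assumes m: "m \<ge> 2" and dev: "\<forall>k<m - 1. ((\<lambda>e. y e $ k - L e) \<longlongrightarrow> d k) F"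
  shows "\<forall>j<m - 1. ((\<lambda>e. (Ainv m *\<^sub>v (y e - L e \<cdot>\<^sub>v vec (m - 1) (\<lambda>_. 1))) $ j)
           \<longlongrightarrow> (\<Sum>k = 0..<m - 1. Ainv m $$ (j, k) * d k)) F"
proof (intro allI impI)
  fix j assume j: "j < m - 1"
  have Ainv: "Ainv m \<in> carrier_mat (m - 1) (m - 1)" using Ainv_props[OF m] by simp
  have "(Ainv m *\<^sub>v (y e - L e \<cdot>\<^sub>v vec (m - 1) (\<lambda>_. 1))) $ j
      = (\<Sum>k = 0..<m - 1. Ainv m $$ (j, k) * (y e $ k - L e))" for e
    using j Ainv by (simp add: scalar_prod_def)
  then show "((\<lambda>e. (Ainv m *\<^sub>v (y e - L e \<cdot>\<^sub>v vec (m - 1) (\<lambda>_. 1))) $ j)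
      \<longlongrightarrow> (\<Sum>k = 0..<m - 1. Ainv m $$ (j, k) * d k)) F"
    using dev by (simp, intro tendsto_sum tendsto_mult_left) auto
qed

lemma Ainv_x_decomposition:
  fixes x :: "'e \<Rightarrow> real vec" and L :: "'e \<Rightarrow> real"
  assumes m: "m \<ge> 2" and dim: "\<forall>\<^sub>F e in F. x e \<in> carrier_vec (m - 1)"
    and asym: "\<forall>j<m - 1. ((\<lambda>e. x e $ j - (L e - ln ((Ainv m *\<^sub>v vec (m - 1) (\<lambda>_. 1)) $ j))) \<longlongrightarrow> 0) F"
  shows "\<exists>r r0. (\<forall>\<^sub>F e in F. Ainv m *\<^sub>v x e = L e \<cdot>\<^sub>v vv m + r e \<and> r e \<in> carrier_vec (m - 1)) \<and>
           (\<forall>j<m - 1. ((\<lambda>e. r e $ j) \<longlongrightarrow> r0 j) F)"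
proof -
  define r where "r e = Ainv m *\<^sub>v (x e - L e \<cdot>\<^sub>v vec (m - 1) (\<lambda>_. 1))" for e
  have Ainv: "Ainv m \<in> carrier_mat (m - 1) (m - 1)" using Ainv_props[OF m] by simp
  have split: "\<forall>\<^sub>F e in F. Ainv m *\<^sub>v x e = L e \<cdot>\<^sub>v vv m + r e \<and> r e \<in> carrier_vec (m - 1)"
    using dim
  proof eventually_elim
    case (elim e)
    have "r e = Ainv m *\<^sub>v x e - L e \<cdot>\<^sub>v vv m"
      using elim Ainv unfolding r_def Ainv_one[OF m, symmetric]
      by (simp add: mult_minus_distrib_mat_vec[OF Ainv] mult_mat_vec[OF Ainv])
    then show ?case using elim Ainv by (auto intro!: eq_vecI simp: vv_def)
  qed
  have "\<forall>k<m - 1. ((\<lambda>e. x e $ k - L e) \<longlongrightarrow> - ln (vfun m (k + 1))) F"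
  proof (intro allI impI)
    fix k assume k: "k < m - 1"
    have "((\<lambda>e. x e $ k - (L e - ln (vfun m (k + 1)))) \<longlongrightarrow> 0) F"
      using asym[rule_format, OF k] k unfolding Ainv_one[OF m] by (simp add: vv_def)
    then have "((\<lambda>e. x e $ k - (L e - ln (vfun m (k + 1))) + - ln (vfun m (k + 1)))
        \<longlongrightarrow> 0 + - ln (vfun m (k + 1))) F"
      by (intro tendsto_add tendsto_const)
    then show "((\<lambda>e. x e $ k - L e) \<longlongrightarrow> - ln (vfun m (k + 1))) F" by simp
  qed
  then have "\<forall>j<m - 1. ((\<lambda>e. r e $ j) \<longlongrightarrow> (\<Sum>k = 0..<m - 1. Ainv m $$ (j, k) * - ln (vfun m (k + 1)))) F"
    unfolding r_def by (rule tendsto_Ainv_deviation[OF m])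
  with split show ?thesis by (intro exI[of _ r] exI conjI) assumption+
qed

theorem lemma6:
  fixes m :: nat and x :: "real \<Rightarrow> real vec"
  assumes m: "m \<ge> 2"
    and dim: "\<forall>\<^sub>F \<epsilon> in at_right 0. x \<epsilon> \<in> carrier_vec (m - 1)"
    and eqn: "\<forall>\<^sub>F \<epsilon> in at_right 0. \<forall>j < m - 1.
               exp (- (x \<epsilon> $ j)) = \<epsilon>\<^sup>2 / 8 * ((Ainv m *\<^sub>v x \<epsilon>) $ j)"
    and asym: "\<forall>j < m - 1. ((\<lambda>\<epsilon>. x \<epsilon> $ j -
               (- 2 * ln \<epsilon> - ln \<bar>ln \<epsilon>\<bar> + 2 * ln 2
                - ln ((Ainv m *\<^sub>v vec (m - 1) (\<lambda>_. 1)) $ j))) \<longlongrightarrow> 0) (at_right 0)"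
  shows "\<exists>C. \<forall>\<^sub>F \<epsilon> in at_right 0. \<exists>\<omega> :: nat \<Rightarrow> real.
           char_poly (eig_mat m (Ainv m *\<^sub>v x \<epsilon>)) = (\<Prod>n = 1..m - 1. [:- \<omega> n, 1:]) \<and>
           (\<forall>n \<in> {1..m - 1}. \<bar>\<omega> n - (2 + (- 4 * ln \<epsilon> - 2 * ln \<bar>ln \<epsilon>\<bar> + 4 * ln 2)
                                         * (real n * (real n + 1) / 2))\<bar> \<le> C)"
proof -
  obtain r r0 where split: "\<forall>\<^sub>F \<epsilon> in at_right 0. Ainv m *\<^sub>v x \<epsilon> = LL \<epsilon> \<cdot>\<^sub>v vv m + r \<epsilon> \<and> r \<epsilon> \<in> carrier_vec (m - 1)"
    and r_lim: "\<forall>j<m - 1. ((\<lambda>\<epsilon>. r \<epsilon> $ j) \<longlongrightarrow> r0 j) (at_right 0)"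
    using Ainv_x_decomposition[OF m dim, of LL] asym unfolding LL_def by blast
  have r_dim: "\<forall>\<^sub>F \<epsilon> in at_right 0. r \<epsilon> \<in> carrier_vec (m - 1)"
    using split by (rule eventually_mono) simp
  obtain C where C: "\<forall>\<^sub>F \<epsilon> in at_right 0. \<exists>\<omega> :: nat \<Rightarrow> real.
      char_poly (eig_mat m (LL \<epsilon> \<cdot>\<^sub>v vv m + r \<epsilon>)) = (\<Prod>n = 1..m - 1. [:- \<omega> n, 1:]) \<and>
      (\<forall>n\<in>{1..m - 1}. \<bar>\<omega> n - (2 + 2 * LL \<epsilon> * lam n)\<bar> \<le> C)"
    using eig_mat_spectrum[OF LL_at_top r_dim r_lim] by blast
  have target: "2 + 2 * LL \<epsilon> * lam n
      = 2 + (- 4 * ln \<epsilon> - 2 * ln \<bar>ln \<epsilon>\<bar> + 4 * ln 2) * (real n * (real n + 1) / 2)" for \<epsilon> n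
    unfolding LL_def lam_def by (simp add: algebra_simps)
  have "\<forall>\<^sub>F \<epsilon> in at_right 0. \<exists>\<omega> :: nat \<Rightarrow> real.
           char_poly (eig_mat m (Ainv m *\<^sub>v x \<epsilon>)) = (\<Prod>n = 1..m - 1. [:- \<omega> n, 1:]) \<and>
           (\<forall>n \<in> {1..m - 1}. \<bar>\<omega> n - (2 + (- 4 * ln \<epsilon> - 2 * ln \<bar>ln \<epsilon>\<bar> + 4 * ln 2)
                                         * (real n * (real n + 1) / 2))\<bar> \<le> C)"
    using C split by eventually_elim (simp only: target)
  then show ?thesis by blast
qed

end
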